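(* Let $\lambda$ be a dominant weight and let $\Gamma=(\beta_i)_{i\in I}$ be a $\lambda$-chain indexed by a totally ordered set $I=\{\overline{1}<\cdots<\overline{t}<1<2<\cdots<q<\overline{t+1}<\cdots<\overline{n}\}$. Assume that $\{\beta_1,\ldots,\beta_q\}$ is exactly the set of positive roots (without repetition) of a rank $2$ root subsystem $\overline{\Phi}\subseteq\Phi$. For $i\in I$ let $l_i:=|\{j\in I: j<i,\ \beta_j=\beta_i\}|$. Let $i\in[q]$ and suppose $\beta_i^\vee=a\beta_1^\vee+b\beta_q^\vee$ with $a,b\in\mathbb{Z}_{\ge 0}$. Then $l_i=a\,l_1+b\,l_q$.
   Context: $\Phi$ is an irreducible (finite, crystallographic) root system of a complex simple Lie algebra, with positive roots $\Phi^+$, simple roots $\alpha_1,\dots,\alpha_r$ and $W$-invariant inner product $\langle\cdot,\cdot\rangle$ on the real span $V$ of $\Phi$; for $\alpha\in\Phi$, $\alpha^\vee:=2\alpha/\langle\alpha,\alpha\rangle$. A weight $\lambda$ is dominant if $\langle\lambda,\alpha^\vee\rangle\in\mathbb{Z}_{\ge0}$ for all $\alpha\in\Phi^+$. For $\alpha\in\Phi$, $k\in\mathbb{Z}$, let $H_{\alpha,k}=\{\mu\in V:\langle\mu,\alpha^\vee\rangle=k\}$. Alcoves are the connected components of $V\setminus\bigcup_{\alpha,k}H_{\alpha,k}$; the fundamental alcove is $A_\circ=\{\mu:0<\langle\mu,\alpha^\vee\rangle<1\ \forall\alpha\in\Phi^+\}$ and $A_{-\lambda}:=A_\circ-\lambda$.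 Two distinct alcoves $A,B$ are adjacent if they share a wall; we write $A\xrightarrow{\beta}B$ if the common wall lies in some $H_{\beta,k}$ and $\beta$ points from $A$ to $B$. A sequence of roots $(\beta_1,\dots,\beta_m)$ (here indexed by the ordered set $I$) is a $\lambda$-chain if $A_\circ=A_0\xrightarrow{-\beta_1}A_1\xrightarrow{-\beta_2}\cdots\xrightarrow{-\beta_m}A_m=A_{-\lambda}$ is an alcove path of minimal possible length between $A_\circ$ and $A_{-\lambda}$; its entries are positive roots. A rank $2$ root subsystem is a subset $\overline{\Phi}\subseteq\Phi$ which is itself a root system of rank $2$; its positive roots are $\overline{\Phi}^+=\overline{\Phi}\cap\Phi^+$. *)

theory Defs
  imports "HOL-Analysis.Analysis"
begin

definition coroot :: "'a::euclidean_space \<Rightarrow> 'a" where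
  "coroot \<alpha> = (2 / (\<alpha> \<bullet> \<alpha>)) *\<^sub>R \<alpha>"

definition reflect :: "'a::euclidean_space \<Rightarrow> 'a \<Rightarrow> 'a" where
  "reflect \<alpha> \<mu> = \<mu> - (\<mu> \<bullet> coroot \<alpha>) *\<^sub>R \<alpha>"

definition root_system :: "'a::euclidean_space set \<Rightarrow> bool" where
  "root_system \<Phi> \<longleftrightarrow> finite \<Phi> \<and> 0 \<notin> \<Phi> \<and>
     (\<forall>\<alpha>\<in>\<Phi>. \<forall>\<beta>\<in>\<Phi>. reflect \<alpha> \<beta> \<in> \<Phi>) \<and>
     (\<forall>\<alpha>\<in>\<Phi>. \<forall>\<beta>\<in>\<Phi>. \<beta> \<bullet> coroot \<alpha> \<in> \<int>) \<and>
     (\<forall>\<alpha>\<in>\<Phi>. \<forall>c::real. c *\<^sub>R \<alpha> \<in> \<Phi> \<longrightarrow> c = 1 \<or> c = -1)"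

definition rank :: "'a::euclidean_space set \<Rightarrow> nat" where
  "rank \<Phi> = dim (span \<Phi>)"

definition irreducible_rs :: "'a::euclidean_space set \<Rightarrow> bool" where
  "irreducible_rs \<Phi> \<longleftrightarrow> \<Phi> \<noteq> {} \<and>
     \<not> (\<exists>\<Phi>1 \<Phi>2. \<Phi> = \<Phi>1 \<union> \<Phi>2 \<and> \<Phi>1 \<noteq> {} \<and> \<Phi>2 \<noteq> {} \<and>
          (\<forall>\<alpha>\<in>\<Phi>1. \<forall>\<beta>\<in>\<Phi>2. \<alpha> \<bullet> \<beta> = 0))"

definition is_base :: "'a::euclidean_space set \<Rightarrow> 'a set \<Rightarrow> bool" where
  "is_base \<Phi> \<Delta> \<longleftrightarrow> \<Delta> \<subseteq> \<Phi> \<and> independent \<Delta> \<and>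
     (\<forall>\<beta>\<in>\<Phi>. \<exists>c::'a \<Rightarrow> int. \<beta> = (\<Sum>\<alpha>\<in>\<Delta>. of_int (c \<alpha>) *\<^sub>R \<alpha>) \<and>
        ((\<forall>\<alpha>\<in>\<Delta>. c \<alpha> \<ge> 0) \<or> (\<forall>\<alpha>\<in>\<Delta>. c \<alpha> \<le> 0)))"

definition pos_roots :: "'a::euclidean_space set \<Rightarrow> 'a set \<Rightarrow> 'a set" where
  "pos_roots \<Phi> \<Delta> = {\<beta>\<in>\<Phi>. \<exists>c::'a \<Rightarrow> int. \<beta> = (\<Sum>\<alpha>\<in>\<Delta>. of_int (c \<alpha>) *\<^sub>R \<alpha>) \<and>
        (\<forall>\<alpha>\<in>\<Delta>. c \<alpha> \<ge> 0)}"

definition dominant :: "'a::euclidean_space set \<Rightarrow> 'a set \<Rightarrow> 'a \<Rightarrow> bool" where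
  "dominant \<Phi> \<Delta> lam \<longleftrightarrow> (\<forall>\<alpha>\<in>pos_roots \<Phi> \<Delta>. lam \<bullet> coroot \<alpha> \<in> \<int> \<and> lam \<bullet> coroot \<alpha> \<ge> 0)"

definition hyp :: "'a::euclidean_space \<Rightarrow> int \<Rightarrow> 'a set" where
  "hyp \<alpha> k = {\<mu>. \<mu> \<bullet> coroot \<alpha> = of_int k}"

definition hyp_union :: "'a::euclidean_space set \<Rightarrow> 'a set" where
  "hyp_union \<Phi> = (\<Union>\<alpha>\<in>\<Phi>. \<Union>k. hyp \<alpha> k)"

definition is_alcove :: "'a::euclidean_space set \<Rightarrow> 'a set \<Rightarrow> bool" where
  "is_alcove \<Phi> A \<longleftrightarrow> (\<exists>x. x \<notin> hyp_union \<Phi> \<and>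
     A = connected_component_set (UNIV - hyp_union \<Phi>) x)"

definition fund_alcove :: "'a::euclidean_space set \<Rightarrow> 'a set \<Rightarrow> 'a set" where
  "fund_alcove \<Phi> \<Delta> = {\<mu>. \<forall>\<alpha>\<in>pos_roots \<Phi> \<Delta>. 0 < \<mu> \<bullet> coroot \<alpha> \<and> \<mu> \<bullet> coroot \<alpha> < 1}"

definition shifted_alcove :: "'a::euclidean_space set \<Rightarrow> 'a set \<Rightarrow> 'a \<Rightarrow> 'a set" where
  "shifted_alcove \<Phi> \<Delta> lam = (\<lambda>\<mu>. \<mu> - lam) ` fund_alcove \<Phi> \<Delta>"

definition share_wall :: "'a::euclidean_space set \<Rightarrow> 'a set \<Rightarrow> 'a set \<Rightarrow> 'a \<Rightarrow> int \<Rightarrow> bool" where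
  "share_wall \<Phi> A B \<beta> k \<longleftrightarrow> is_alcove \<Phi> A \<and> is_alcove \<Phi> B \<and> A \<noteq> B \<and> \<beta> \<in> \<Phi> \<and>
     aff_dim (closure A \<inter> closure B \<inter> hyp \<beta> k) = int DIM('a) - 1"

definition adjacent :: "'a::euclidean_space set \<Rightarrow> 'a set \<Rightarrow> 'a set \<Rightarrow> bool" where
  "adjacent \<Phi> A B \<longleftrightarrow> (\<exists>\<beta> k. share_wall \<Phi> A B \<beta> k)"

definition alcove_arrow :: "'a::euclidean_space set \<Rightarrow> 'a set \<Rightarrow> 'a \<Rightarrow> 'a set \<Rightarrow> bool" where
  "alcove_arrow \<Phi> A \<beta> B \<longleftrightarrow> (\<exists>k. share_wall \<Phi> A B \<beta> k \<and>
     (\<forall>x\<in>A. x \<bullet> coroot \<beta> < of_int k) \<and> (\<forall>y\<in>B. y \<bullet> coroot \<beta> > of_int k))"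

text \<open>An alcove path from A to B: a sequence of alcoves, consecutive ones adjacent.
  Its length is the number of steps (length of the list minus one).\<close>
definition alcove_path :: "'a::euclidean_space set \<Rightarrow> 'a set list \<Rightarrow> 'a set \<Rightarrow> 'a set \<Rightarrow> bool" where
  "alcove_path \<Phi> As A B \<longleftrightarrow> As \<noteq> [] \<and> hd As = A \<and> last As = B \<and>
     (\<forall>A'\<in>set As. is_alcove \<Phi> A') \<and>
     (\<forall>j. Suc j < length As \<longrightarrow> adjacent \<Phi> (As ! j) (As ! Suc j))"

text \<open>lam-chain (\<beta>_1,...,\<beta>_m): a minimal length alcove path
  A_0 = A_\<circ> --(-\<beta>_1)--> A_1 ... --(-\<beta>_m)--> A_m = A_{-lam}.\<close>
definition lambda_chain :: "'a::euclidean_space set \<Rightarrow> 'a set \<Rightarrow> 'a \<Rightarrow> 'a list \<Rightarrow> bool" where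
  "lambda_chain \<Phi> \<Delta> lam \<beta>s \<longleftrightarrow> (\<exists>As.
     length As = Suc (length \<beta>s) \<and>
     alcove_path \<Phi> As (fund_alcove \<Phi> \<Delta>) (shifted_alcove \<Phi> \<Delta> lam) \<and>
     (\<forall>j < length \<beta>s. alcove_arrow \<Phi> (As ! j) (- (\<beta>s ! j)) (As ! Suc j)) \<and>
     (\<forall>Bs. alcove_path \<Phi> Bs (fund_alcove \<Phi> \<Delta>) (shifted_alcove \<Phi> \<Delta> lam) \<longrightarrow>
           length As \<le> length Bs))"

end

theory Submission
  imports Defs
begin

text \<open>Every alcove lies in a slab \<open>m < \<langle>x, \<beta>\<^sup>\<or>\<rangle> < m + 1\<close>; call \<open>m\<close> its \<open>\<beta>\<close>-level. Along the
  alcove path of a \<open>\<lambda>\<close>-chain, an entry \<open>\<beta>\<close> lowers the \<open>\<beta>\<close>-level by one, an entry \<open>-\<beta>\<close> raises it,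
  and all other entries leave it unchanged, because adjacent alcoves are separated only by their
  common wall. Minimality of the path rules out an entry \<open>-\<beta>\<close> before an entry \<open>\<beta>\<close> (the part of the
  path between the two mirror-image steps could be reflected, saving two steps). Hence at the
  position of \<open>\<beta>\<^sub>j\<close> its level is \<open>-l\<^sub>j\<close>, and since each root of the block \<open>\<beta>\<^sub>1, \<dots>, \<beta>\<^sub>q\<close> occurs
  there exactly once, the levels of \<open>\<beta>\<^sub>1, \<beta>\<^sub>i, \<beta>\<^sub>q\<close> are \<open>-l\<^sub>1, -l\<^sub>i, -l\<^sub>q\<close> just before the block
  and one less just after it. Evaluating \<open>\<beta>\<^sub>i\<^sup>\<or> = a\<beta>\<^sub>1\<^sup>\<or> + b\<beta>\<^sub>q\<^sup>\<or>\<close> at a point of the alcove before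
  the block gives \<open>l\<^sub>i \<le> a l\<^sub>1 + b l\<^sub>q\<close>, and at a point after it the reverse inequality.\<close>

section \<open>Levels of alcoves\<close>

definition level_slab :: "'a::euclidean_space \<Rightarrow> int \<Rightarrow> 'a set" where
  "level_slab \<gamma> m = {x. of_int m < x \<bullet> coroot \<gamma> \<and> x \<bullet> coroot \<gamma> < of_int m + 1}"

text \<open>Unspecified unless \<open>A\<close> lies in a single slab, which alcoves do.\<close>
definition alcove_level :: "'a::euclidean_space \<Rightarrow> 'a set \<Rightarrow> int" where
  "alcove_level \<gamma> A = (SOME m. A \<subseteq> level_slab \<gamma> m)"

lemma convex_level_slab: "convex (level_slab \<gamma> m)"
proof -
  have "level_slab \<gamma> m = {x. coroot \<gamma> \<bullet> x > of_int m} \<inter> {x. coroot \<gamma> \<bullet> x < of_int m + 1}"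
    by (auto simp: level_slab_def inner_commute)
  then show ?thesis
    by (simp add: convex_Int convex_halfspace_gt convex_halfspace_lt)
qed

lemma level_slab_disjoint_hyp: "level_slab \<gamma> m \<inter> hyp \<gamma> k = {}"
proof -
  have "\<not> (of_int m < (of_int k :: real) \<and> of_int k < (of_int (m + 1) :: real))"
    unfolding of_int_less_iff by linarith
  then show ?thesis
    by (auto simp: level_slab_def hyp_def)
qed

lemma level_slab_unique:
  assumes "x \<in> level_slab \<gamma> m" "x \<in> level_slab \<gamma> m'"
  shows "m = m'"
proof -
  have "of_int m < (of_int m' + 1 :: real)" "of_int m' < (of_int m + 1 :: real)"
    using assms by (auto simp: level_slab_def)
  then show ?thesis by linarith
qed

lemma alcove_nonempty:
  assumes "is_alcove \<Phi> A" shows "A \<noteq> {}"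
  using assms unfolding is_alcove_def by (metis DiffI UNIV_I connected_component_eq_empty)

lemma alcove_disjoint_hyp:
  assumes "is_alcove \<Phi> A" "\<gamma> \<in> \<Phi>"
  shows "A \<inter> hyp \<gamma> k = {}"
  using assms connected_component_subset
  by (fastforce simp: is_alcove_def hyp_union_def)

lemma alcove_subset_level_slab:
  assumes A: "is_alcove \<Phi> A" and \<gamma>: "\<gamma> \<in> \<Phi>"
  shows "A \<subseteq> level_slab \<gamma> (alcove_level \<gamma> A)"
proof -
  obtain x0 where "x0 \<notin> hyp_union \<Phi>" and A_eq: "A = connected_component_set (UNIV - hyp_union \<Phi>) x0"
    using A by (auto simp: is_alcove_def)
  then have x0: "x0 \<in> A" by auto
  have "connected A" using A_eq by simp
  define m where "m = \<lfloor>x0 \<bullet> coroot \<gamma>\<rfloor>"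
  have avoid: "x \<bullet> coroot \<gamma> \<noteq> of_int k" if "x \<in> A" for x k
    using alcove_disjoint_hyp[OF A \<gamma>] that by (auto simp: hyp_def)
  have m0: "of_int m < x0 \<bullet> coroot \<gamma>" "x0 \<bullet> coroot \<gamma> < of_int m + 1"
    using avoid[OF x0, of m] unfolding m_def by linarith+
  text \<open>A connected set avoiding \<open>H\<^sub>\<gamma>\<^sub>,\<^sub>m\<close> and \<open>H\<^sub>\<gamma>\<^sub>,\<^sub>m\<^sub>+\<^sub>1\<close> stays in the slab between them.\<close>
  have "x \<in> level_slab \<gamma> m" if x: "x \<in> A" for x
  proof (rule ccontr)
    assume "x \<notin> level_slab \<gamma> m"
    then have "\<exists>z\<in>A. coroot \<gamma> \<bullet> z = of_int m \<or> coroot \<gamma> \<bullet> z = of_int (m + 1)"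
      using connected_ivt_hyperplane[OF \<open>connected A\<close> x x0, of "coroot \<gamma>" "of_int m"]
        connected_ivt_hyperplane[OF \<open>connected A\<close> x0 x, of "coroot \<gamma>" "of_int (m + 1)"] m0
      by (force simp: level_slab_def inner_commute)
    then show False using avoid by (metis inner_commute)
  qed
  then have "A \<subseteq> level_slab \<gamma> m" by blast
  then show ?thesis
    unfolding alcove_level_def by (rule someI)
qed

lemma alcove_levelI:
  assumes "A \<noteq> {}" "A \<subseteq> level_slab \<gamma> m"
  shows "alcove_level \<gamma> A = m"
proof -
  obtain x where "x \<in> A" using assms(1) by blast
  moreover have "A \<subseteq> level_slab \<gamma> (alcove_level \<gamma> A)"
    unfolding alcove_level_def using assms(2) by (rule someI)
  ultimately show ?thesis
    using assms(2) level_slab_unique by blast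
qed

lemma closure_alcove_level_bounds:
  assumes "is_alcove \<Phi> A" "\<gamma> \<in> \<Phi>" "z \<in> closure A"
  shows "of_int (alcove_level \<gamma> A) \<le> z \<bullet> coroot \<gamma>" "z \<bullet> coroot \<gamma> \<le> of_int (alcove_level \<gamma> A) + 1"
proof -
  let ?T = "{z. of_int (alcove_level \<gamma> A) \<le> z \<bullet> coroot \<gamma> \<and> z \<bullet> coroot \<gamma> \<le> of_int (alcove_level \<gamma> A) + 1}"
  have "closed ?T"
    by (intro closed_Collect_conj closed_Collect_le continuous_intros)
  moreover have "A \<subseteq> ?T"
    using alcove_subset_level_slab[OF assms(1,2)] by (auto simp: level_slab_def)
  ultimately have "closure A \<subseteq> ?T" by (rule closure_minimal[rotated])
  then show "of_int (alcove_level \<gamma> A) \<le> z \<bullet> coroot \<gamma>" "z \<bullet> coroot \<gamma> \<le> of_int (alcove_level \<gamma> A) + 1"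
    using assms(3) by blast+
qed

lemma alcove_eqI:
  assumes A: "is_alcove \<Phi> A" and B: "is_alcove \<Phi> B"
    and levels: "\<And>\<gamma>. \<gamma> \<in> \<Phi> \<Longrightarrow> alcove_level \<gamma> A = alcove_level \<gamma> B"
  shows "A = B"
proof -
  obtain x where "x \<notin> hyp_union \<Phi>" and A_eq: "A = connected_component_set (UNIV - hyp_union \<Phi>) x"
    using A by (auto simp: is_alcove_def)
  then have x: "x \<in> A" by auto
  obtain y where "y \<notin> hyp_union \<Phi>" and B_eq: "B = connected_component_set (UNIV - hyp_union \<Phi>) y"
    using B by (auto simp: is_alcove_def)
  then have y: "y \<in> B" by auto
  text \<open>Since every slab is convex, the segment from \<open>x\<close> to \<open>y\<close> crosses no hyperplane.\<close>
  have "closed_segment x y \<subseteq> level_slab \<gamma> (alcove_level \<gamma> A)" if "\<gamma> \<in> \<Phi>" for \<gamma>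
    using alcove_subset_level_slab[OF A that] alcove_subset_level_slab[OF B that] levels[OF that] x y
    by (intro closed_segment_subset convex_level_slab) auto
  then have "closed_segment x y \<subseteq> UNIV - hyp_union \<Phi>"
    using level_slab_disjoint_hyp by (fastforce simp: hyp_union_def)
  then have "closed_segment x y \<subseteq> A"
    unfolding A_eq by (intro connected_component_maximal) auto
  then have "y \<in> A" by auto
  then show ?thesis
    using A_eq B_eq connected_component_eq by blast
qed

lemma root_system_nonzero: "root_system \<Phi> \<Longrightarrow> \<alpha> \<in> \<Phi> \<Longrightarrow> \<alpha> \<noteq> 0"
  unfolding root_system_def by auto

lemma root_system_reflect: "root_system \<Phi> \<Longrightarrow> \<alpha> \<in> \<Phi> \<Longrightarrow> \<beta> \<in> \<Phi> \<Longrightarrow> reflect \<alpha> \<beta> \<in> \<Phi>"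
  unfolding root_system_def by auto

lemma root_system_inner_coroot_Ints:
  "root_system \<Phi> \<Longrightarrow> \<alpha> \<in> \<Phi> \<Longrightarrow> \<beta> \<in> \<Phi> \<Longrightarrow> \<beta> \<bullet> coroot \<alpha> \<in> \<int>"
  unfolding root_system_def by auto

lemma root_system_multiple: "root_system \<Phi> \<Longrightarrow> \<alpha> \<in> \<Phi> \<Longrightarrow> c *\<^sub>R \<alpha> \<in> \<Phi> \<Longrightarrow> c = 1 \<or> c = -1"
  unfolding root_system_def by auto

lemma coroot_nonzero: "\<alpha> \<noteq> 0 \<Longrightarrow> coroot \<alpha> \<noteq> 0"
  unfolding coroot_def by simp

lemma coroot_uminus: "coroot (- \<alpha>) = - coroot \<alpha>"
  unfolding coroot_def by simp

lemma inner_coroot_self: "\<alpha> \<noteq> 0 \<Longrightarrow> \<alpha> \<bullet> coroot \<alpha> = 2"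
  unfolding coroot_def by simp

lemma reflect_self: "\<alpha> \<noteq> 0 \<Longrightarrow> reflect \<alpha> \<alpha> = - \<alpha>"
  unfolding reflect_def by (simp add: inner_coroot_self scaleR_2)

lemma root_system_uminus: "root_system \<Phi> \<Longrightarrow> \<alpha> \<in> \<Phi> \<Longrightarrow> - \<alpha> \<in> \<Phi>"
  by (metis reflect_self root_system_nonzero root_system_reflect)

lemma root_system_uminus_neq: "root_system \<Phi> \<Longrightarrow> \<alpha> \<in> \<Phi> \<Longrightarrow> - \<alpha> \<noteq> \<alpha>"
  by (metis add.inverse_inverse add_eq_0_iff2 root_system_nonzero scaleR_2 scaleR_eq_0_iff
      zero_neq_numeral)

lemma affine_hyp: "affine (hyp \<beta> k)"
proof -
  have "hyp \<beta> k = {x. coroot \<beta> \<bullet> x = of_int k}"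
    unfolding hyp_def by (auto simp: inner_commute)
  then show ?thesis using affine_hyperplane by simp
qed

lemma aff_dim_hyp: "\<beta> \<noteq> 0 \<Longrightarrow> aff_dim (hyp \<beta> k) = int (DIM('a) - 1)" for \<beta> :: "'a::euclidean_space"
proof -
  assume "\<beta> \<noteq> 0"
  moreover have "affine hull (hyp \<beta> k) = {x. coroot \<beta> \<bullet> x = of_int k}"
    using affine_hyp[of \<beta> k] unfolding hyp_def by (auto simp: inner_commute)
  ultimately show ?thesis
    using aff_dim_eq_hyperplane[of "hyp \<beta> k"] coroot_nonzero by blast
qed

lemma hyperplane_subset_parallel:
  fixes a c :: "'a::euclidean_space"
  assumes a: "a \<noteq> 0" and sub: "{x. a \<bullet> x = b} \<subseteq> {x. c \<bullet> x = d}"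
  shows "\<exists>r. c = r *\<^sub>R a"
proof -
  define p where "p = (b / (a \<bullet> a)) *\<^sub>R a"
  have p: "a \<bullet> p = b" using a by (simp add: p_def)
  define v where "v = c - ((c \<bullet> a) / (a \<bullet> a)) *\<^sub>R a"
  have va: "a \<bullet> v = 0" using a by (simp add: v_def inner_diff_right inner_commute)
  text \<open>\<open>c\<close> is orthogonal to every direction inside the first hyperplane, in particular to \<open>v\<close>.\<close>
  have "p \<in> {x. a \<bullet> x = b}" "p + v \<in> {x. a \<bullet> x = b}"
    using p va by (auto simp: inner_add_right)
  then have "c \<bullet> p = d" "c \<bullet> (p + v) = d"
    using sub by blast+
  then have "c \<bullet> v = 0" by (simp add: inner_add_right)
  then have "v \<bullet> v = 0"
    using va by (simp add: v_def inner_diff_left inner_commute)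
  then show ?thesis
    by (intro exI[of _ "(c \<bullet> a) / (a \<bullet> a)"]) (simp add: v_def)
qed

text \<open>Two hyperplanes containing a common set of codimension one coincide, so their coroots, and
  hence the roots, are parallel.\<close>
lemma roots_parallel_of_common_wall:
  fixes Z :: "'a::euclidean_space set"
  assumes \<rho>0: "\<rho> \<noteq> 0" and dim: "aff_dim Z = int DIM('a) - 1"
    and Z: "Z \<subseteq> hyp \<rho> k" "Z \<subseteq> hyp \<delta> n"
  shows "\<exists>c. \<delta> = c *\<^sub>R \<rho>"
proof -
  have "aff_dim Z = int (DIM('a) - 1)"
    using dim DIM_positive[where 'a='a] by (simp add: of_nat_diff)
  then obtain a b where a: "a \<noteq> 0" and hull: "affine hull Z = {x. a \<bullet> x = b}"
    using aff_dim_eq_hyperplane by blast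
  have "affine hull Z \<subseteq> hyp \<rho> k" "affine hull Z \<subseteq> hyp \<delta> n"
    using Z by (simp_all add: hull_minimal affine_hyp)
  then have "{x. a \<bullet> x = b} \<subseteq> {x. coroot \<rho> \<bullet> x = of_int k}" "{x. a \<bullet> x = b} \<subseteq> {x. coroot \<delta> \<bullet> x = of_int n}"
    using hull by (auto simp: hyp_def inner_commute)
  then obtain r1 r2 where r1: "coroot \<rho> = r1 *\<^sub>R a" and r2: "coroot \<delta> = r2 *\<^sub>R a"
    using hyperplane_subset_parallel[OF a] by meson
  have "r1 \<noteq> 0" using coroot_nonzero[OF \<rho>0] r1 by auto
  then have coroot_\<delta>: "coroot \<delta> = (r2 / r1) *\<^sub>R coroot \<rho>" using r1 r2 by simp
  have "\<delta> = ((\<delta> \<bullet> \<delta>) / 2) *\<^sub>R coroot \<delta>"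
    by (cases "\<delta> = 0") (simp_all add: coroot_def)
  also have "\<dots> = ((\<delta> \<bullet> \<delta>) / 2 * (r2 / r1) * (2 / (\<rho> \<bullet> \<rho>))) *\<^sub>R \<rho>"
    by (simp add: coroot_\<delta> coroot_def[of \<rho>])
  finally show ?thesis by blast
qed

lemma closure_alcoves_subset_hyp:
  assumes X: "is_alcove \<Phi> X" and Y: "is_alcove \<Phi> Y" and \<delta>: "\<delta> \<in> \<Phi>"
    and ne: "alcove_level \<delta> X \<noteq> alcove_level \<delta> Y"
  shows "closure X \<inter> closure Y \<subseteq> hyp \<delta> (max (alcove_level \<delta> X) (alcove_level \<delta> Y))"
proof
  fix z assume z: "z \<in> closure X \<inter> closure Y"
  define lX lY where "lX = alcove_level \<delta> X" and "lY = alcove_level \<delta> Y"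
  have bounds: "of_int lX \<le> z \<bullet> coroot \<delta>" "z \<bullet> coroot \<delta> \<le> of_int lX + 1"
    "of_int lY \<le> z \<bullet> coroot \<delta>" "z \<bullet> coroot \<delta> \<le> of_int lY + 1"
    using closure_alcove_level_bounds[OF X \<delta>, of z] closure_alcove_level_bounds[OF Y \<delta>, of z] z
    by (simp_all add: lX_def lY_def)
  consider "lX + 1 \<le> lY" | "lY + 1 \<le> lX"
    using ne by (fastforce simp: lX_def lY_def)
  then have "z \<bullet> coroot \<delta> = of_int (max lX lY)"
  proof cases
    case 1
    then have "real_of_int (lX + 1) \<le> of_int lY" by (simp only: of_int_le_iff)
    then show ?thesis using 1 bounds by simp
  next
    case 2
    then have "real_of_int (lY + 1) \<le> of_int lX" by (simp only: of_int_le_iff)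
    then show ?thesis using 2 bounds by simp
  qed
  then show "z \<in> hyp \<delta> (max lX lY)" by (simp add: hyp_def)
qed

lemma alcove_level_eq_across_wall:
  fixes X Y :: "'a::euclidean_space set"
  assumes rs: "root_system \<Phi>" and X: "is_alcove \<Phi> X" and Y: "is_alcove \<Phi> Y" and \<rho>: "\<rho> \<in> \<Phi>"
    and wall: "aff_dim (closure X \<inter> closure Y \<inter> hyp \<rho> k) = int DIM('a) - 1"
    and \<delta>: "\<delta> \<in> \<Phi>" "\<delta> \<noteq> \<rho>" "\<delta> \<noteq> - \<rho>"
  shows "alcove_level \<delta> X = alcove_level \<delta> Y"
proof (rule ccontr)
  assume "alcove_level \<delta> X \<noteq> alcove_level \<delta> Y"
  then have "closure X \<inter> closure Y \<inter> hyp \<rho> k \<subseteq> hyp \<delta> (max (alcove_level \<delta> X) (alcove_level \<delta> Y))"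
    using closure_alcoves_subset_hyp[OF X Y \<delta>(1)] by blast
  then obtain c where "\<delta> = c *\<^sub>R \<rho>"
    using roots_parallel_of_common_wall[OF root_system_nonzero[OF rs \<rho>] wall] by blast
  moreover from this have "c = 1 \<or> c = -1"
    using root_system_multiple[OF rs \<rho>] \<delta>(1) by metis
  ultimately show False
    using \<delta> by auto
qed

section \<open>Affine reflections\<close>

definition affine_reflection :: "'a::euclidean_space \<Rightarrow> real \<Rightarrow> 'a \<Rightarrow> 'a" where
  "affine_reflection \<beta> m x = x - (x \<bullet> coroot \<beta> - m) *\<^sub>R \<beta>"

lemma reflect_involution: "\<beta> \<noteq> 0 \<Longrightarrow> reflect \<beta> (reflect \<beta> x) = x"
  unfolding reflect_def by (simp add: inner_diff_left inner_coroot_self)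

lemma inner_reflect_reflect: "\<beta> \<noteq> 0 \<Longrightarrow> reflect \<beta> u \<bullet> reflect \<beta> v = u \<bullet> v"
  unfolding reflect_def coroot_def
  by (simp add: inner_diff_left inner_diff_right inner_commute field_simps)

lemma linear_reflect: "linear (reflect \<beta>)"
  unfolding reflect_def by (auto simp: linear_iff inner_add_left algebra_simps)

lemma coroot_reflect: "\<beta> \<noteq> 0 \<Longrightarrow> coroot (reflect \<beta> \<gamma>) = reflect \<beta> (coroot \<gamma>)"
proof -
  have "reflect \<beta> (c *\<^sub>R v) = c *\<^sub>R reflect \<beta> v" for c v
    unfolding reflect_def by (simp add: algebra_simps)
  then show "\<beta> \<noteq> 0 \<Longrightarrow> ?thesis"
    unfolding coroot_def[of "reflect \<beta> \<gamma>"] coroot_def[of \<gamma>] by (simp add: inner_reflect_reflect)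
qed

lemma inner_reflect_root: "\<beta> \<noteq> 0 \<Longrightarrow> \<beta> \<bullet> reflect \<beta> w = - (\<beta> \<bullet> w)"
  unfolding reflect_def coroot_def by (simp add: inner_diff_right inner_commute)

lemma affine_reflection_eq: "affine_reflection \<beta> m x = reflect \<beta> x + m *\<^sub>R \<beta>"
  unfolding affine_reflection_def reflect_def by (simp add: algebra_simps)

lemma affine_reflection_uminus: "affine_reflection (- \<beta>) m = affine_reflection \<beta> (- m)"
  unfolding affine_reflection_def by (auto simp: coroot_uminus algebra_simps fun_eq_iff)

lemma affine_reflection_involution: "\<beta> \<noteq> 0 \<Longrightarrow> affine_reflection \<beta> m (affine_reflection \<beta> m x) = x"
  unfolding affine_reflection_def by (simp add: inner_diff_left inner_coroot_self algebra_simps)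

lemma affine_reflection_image_image:
  "\<beta> \<noteq> 0 \<Longrightarrow> affine_reflection \<beta> m ` affine_reflection \<beta> m ` A = A"
  by (simp add: image_image affine_reflection_involution)

lemma inj_affine_reflection: "\<beta> \<noteq> 0 \<Longrightarrow> inj (affine_reflection \<beta> m)"
  by (metis injI affine_reflection_involution)

lemma continuous_on_affine_reflection: "continuous_on S (affine_reflection \<beta> m)"
  unfolding affine_reflection_def by (intro continuous_intros)

lemma inner_coroot_affine_reflection:
  "\<beta> \<noteq> 0 \<Longrightarrow> affine_reflection \<beta> m x \<bullet> coroot (reflect \<beta> \<gamma>) = x \<bullet> coroot \<gamma> - m * (\<beta> \<bullet> coroot \<gamma>)"
  by (simp add: affine_reflection_eq coroot_reflect inner_add_left inner_reflect_reflect inner_reflect_root)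

lemma affine_reflection_image_hyp:
  assumes \<beta>: "\<beta> \<noteq> 0" and n: "\<beta> \<bullet> coroot \<gamma> = of_int n"
  shows "affine_reflection \<beta> (of_int M) ` hyp \<gamma> k = hyp (reflect \<beta> \<gamma>) (k - M * n)"
proof
  show "affine_reflection \<beta> (of_int M) ` hyp \<gamma> k \<subseteq> hyp (reflect \<beta> \<gamma>) (k - M * n)"
    using \<beta> n by (auto simp: hyp_def inner_coroot_affine_reflection)
next
  show "hyp (reflect \<beta> \<gamma>) (k - M * n) \<subseteq> affine_reflection \<beta> (of_int M) ` hyp \<gamma> k"
  proof
    fix y assume y: "y \<in> hyp (reflect \<beta> \<gamma>) (k - M * n)"
    let ?x = "affine_reflection \<beta> (of_int M) y"
    have "?x \<bullet> coroot \<gamma> = ?x \<bullet> coroot (reflect \<beta> (reflect \<beta> \<gamma>))"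
      using \<beta> by (simp add: reflect_involution)
    also have "\<dots> = y \<bullet> coroot (reflect \<beta> \<gamma>) - of_int M * (\<beta> \<bullet> coroot (reflect \<beta> \<gamma>))"
      using \<beta> by (rule inner_coroot_affine_reflection)
    also have "\<beta> \<bullet> coroot (reflect \<beta> \<gamma>) = - of_int n"
      using \<beta> n by (simp add: coroot_reflect inner_reflect_root)
    finally have "?x \<in> hyp \<gamma> k"
      using y by (simp add: hyp_def algebra_simps)
    moreover have "y = affine_reflection \<beta> (of_int M) ?x"
      using \<beta> by (simp add: affine_reflection_involution)
    ultimately show "y \<in> affine_reflection \<beta> (of_int M) ` hyp \<gamma> k" by blast
  qed
qed

lemma affine_reflection_notin_hyp_union:
  assumes rs: "root_system \<Phi>" and \<beta>: "\<beta> \<in> \<Phi>" and x: "x \<notin> hyp_union \<Phi>"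
  shows "affine_reflection \<beta> (of_int M) x \<notin> hyp_union \<Phi>"
proof
  assume "affine_reflection \<beta> (of_int M) x \<in> hyp_union \<Phi>"
  then obtain \<delta> k where \<delta>: "\<delta> \<in> \<Phi>" and k: "affine_reflection \<beta> (of_int M) x \<in> hyp \<delta> k"
    unfolding hyp_union_def by auto
  have \<beta>0: "\<beta> \<noteq> 0" using root_system_nonzero[OF rs \<beta>] .
  define \<gamma> where "\<gamma> = reflect \<beta> \<delta>"
  have \<gamma>: "\<gamma> \<in> \<Phi>" unfolding \<gamma>_def using root_system_reflect[OF rs \<beta> \<delta>] .
  obtain n where n: "\<beta> \<bullet> coroot \<gamma> = of_int n"
    using root_system_inner_coroot_Ints[OF rs \<gamma> \<beta>] by (auto elim: Ints_cases)
  have "\<delta> = reflect \<beta> \<gamma>" using \<beta>0 by (simp add: \<gamma>_def reflect_involution)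
  then have "x \<bullet> coroot \<gamma> = of_int (k + M * n)"
    using k n inner_coroot_affine_reflection[OF \<beta>0, of "of_int M" x \<gamma>] by (simp add: hyp_def)
  then show False
    using x \<gamma> unfolding hyp_union_def hyp_def by blast
qed

lemma affine_reflection_connected_component:
  assumes rs: "root_system \<Phi>" and \<beta>: "\<beta> \<in> \<Phi>"
  shows "affine_reflection \<beta> (of_int M) ` connected_component_set (UNIV - hyp_union \<Phi>) x =
         connected_component_set (UNIV - hyp_union \<Phi>) (affine_reflection \<beta> (of_int M) x)"
proof -
  let ?S = "UNIV - hyp_union \<Phi>"
  let ?f = "affine_reflection \<beta> (of_int M)"
  have \<beta>0: "\<beta> \<noteq> 0" using root_system_nonzero[OF rs \<beta>] .
  have image_subset: "?f ` connected_component_set ?S y \<subseteq> connected_component_set ?S (?f y)" for y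
  proof (cases "y \<in> ?S")
    case True
    show ?thesis
    proof (rule connected_component_maximal)
      show "?f y \<in> ?f ` connected_component_set ?S y"
        using True by (simp add: connected_component_refl)
      show "connected (?f ` connected_component_set ?S y)"
        by (rule connected_continuous_image[OF continuous_on_affine_reflection]) simp
      show "?f ` connected_component_set ?S y \<subseteq> ?S"
        using affine_reflection_notin_hyp_union[OF rs \<beta>] connected_component_subset by fastforce
    qed
  next
    case False
    then have "connected_component_set ?S y = {}" by (metis connected_component_eq_empty)
    then show ?thesis by (simp only: image_empty empty_subsetI)
  qed
  have "?f ` connected_component_set ?S (?f x) \<subseteq> connected_component_set ?S x"
    using image_subset[of "?f x"] \<beta>0 by (simp add: affine_reflection_involution)
  then have "connected_component_set ?S (?f x) \<subseteq> ?f ` connected_component_set ?S x"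
    using \<beta>0 by (metis affine_reflection_image_image image_mono)
  with image_subset[of x] show ?thesis by blast
qed

lemma is_alcove_affine_reflection:
  assumes "root_system \<Phi>" "\<beta> \<in> \<Phi>" "is_alcove \<Phi> A"
  shows "is_alcove \<Phi> (affine_reflection \<beta> (of_int M) ` A)"
  using assms affine_reflection_notin_hyp_union affine_reflection_connected_component
  unfolding is_alcove_def by metis

lemma closure_affine_reflection_image:
  assumes \<beta>0: "\<beta> \<noteq> 0"
  shows "closure (affine_reflection \<beta> m ` A) = affine_reflection \<beta> m ` closure A"
proof -
  have image_closure: "affine_reflection \<beta> m ` closure B \<subseteq> closure (affine_reflection \<beta> m ` B)" for B
    by (rule image_closure_subset[OF continuous_on_affine_reflection])
      (auto intro: closure_subset[THEN subsetD])
  have "closure (affine_reflection \<beta> m ` A) \<subseteq> affine_reflection \<beta> m ` closure A"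
    using image_closure[of "affine_reflection \<beta> m ` A"] \<beta>0
    by (metis affine_reflection_image_image image_mono)
  with image_closure[of A] show ?thesis by blast
qed

lemma aff_dim_affine_reflection_image:
  assumes "\<beta> \<noteq> 0"
  shows "aff_dim (affine_reflection \<beta> m ` Z) = aff_dim Z"
proof -
  have "affine_reflection \<beta> m ` Z = (+) (m *\<^sub>R \<beta>) ` (reflect \<beta> ` Z)"
    by (auto simp: affine_reflection_eq image_image add.commute)
  moreover have "inj (reflect \<beta>)"
    using assms by (metis injI reflect_involution)
  ultimately show ?thesis
    by (simp add: aff_dim_translation_eq linear_reflect)
qed

lemma share_wall_affine_reflection:
  assumes rs: "root_system \<Phi>" and \<beta>: "\<beta> \<in> \<Phi>" and wall: "share_wall \<Phi> A B \<gamma> k"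
  obtains n where "share_wall \<Phi> (affine_reflection \<beta> (of_int M) ` A) (affine_reflection \<beta> (of_int M) ` B)
    (reflect \<beta> \<gamma>) (k - M * n)"
proof -
  let ?f = "affine_reflection \<beta> (of_int M)"
  have \<beta>0: "\<beta> \<noteq> 0" using root_system_nonzero[OF rs \<beta>] .
  have A: "is_alcove \<Phi> A" and B: "is_alcove \<Phi> B" and "A \<noteq> B" and \<gamma>: "\<gamma> \<in> \<Phi>"
    and ad: "aff_dim (closure A \<inter> closure B \<inter> hyp \<gamma> k) = int DIM('a) - 1"
    using wall unfolding share_wall_def by auto
  obtain n where n: "\<beta> \<bullet> coroot \<gamma> = of_int n"
    using root_system_inner_coroot_Ints[OF rs \<gamma> \<beta>] by (auto elim: Ints_cases)
  have "closure (?f ` A) \<inter> closure (?f ` B) \<inter> hyp (reflect \<beta> \<gamma>) (k - M * n)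
        = ?f ` (closure A \<inter> closure B \<inter> hyp \<gamma> k)"
    using closure_affine_reflection_image[OF \<beta>0] affine_reflection_image_hyp[OF \<beta>0 n]
      inj_affine_reflection[OF \<beta>0] by (simp add: image_Int)
  moreover have "?f ` A \<noteq> ?f ` B"
    using \<open>A \<noteq> B\<close> inj_affine_reflection[OF \<beta>0] by (simp add: inj_image_eq_iff)
  ultimately show ?thesis
    using that[of n] ad aff_dim_affine_reflection_image[OF \<beta>0] root_system_reflect[OF rs \<beta> \<gamma>]
      is_alcove_affine_reflection[OF rs \<beta> A] is_alcove_affine_reflection[OF rs \<beta> B]
    unfolding share_wall_def by simp
qed

lemma adjacent_affine_reflection:
  assumes "root_system \<Phi>" "\<beta> \<in> \<Phi>" "adjacent \<Phi> A B"
  shows "adjacent \<Phi> (affine_reflection \<beta> (of_int M) ` A) (affine_reflection \<beta> (of_int M) ` B)"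
  using assms share_wall_affine_reflection unfolding adjacent_def by metis

section \<open>Crossing a wall\<close>

lemma alcove_level_uminus:
  assumes "is_alcove \<Phi> X" "\<beta> \<in> \<Phi>"
  shows "alcove_level (- \<beta>) X = - alcove_level \<beta> X - 1"
  using alcove_subset_level_slab[OF assms]
  by (intro alcove_levelI alcove_nonempty[OF assms(1)]) (auto simp: level_slab_def coroot_uminus)

lemma aff_dim_wall_le:
  fixes A B :: "'a::euclidean_space set"
  assumes "\<beta> \<noteq> 0"
  shows "aff_dim (closure A \<inter> closure B \<inter> hyp \<beta> k) \<le> int DIM('a) - 1"
proof -
  have "aff_dim (closure A \<inter> closure B \<inter> hyp \<beta> k) \<le> aff_dim (hyp \<beta> k)"
    by (intro aff_dim_subset) blast
  then show ?thesis
    using aff_dim_hyp[OF assms] DIM_positive[where 'a='a] by (simp add: of_nat_diff)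
qed

lemma alcove_arrow_wall:
  fixes A B :: "'a::euclidean_space set"
  assumes rs: "root_system \<Phi>" and arrow: "alcove_arrow \<Phi> A \<gamma> B"
  shows "\<gamma> \<in> \<Phi>"
    and "share_wall \<Phi> A B \<gamma> (alcove_level \<gamma> A + 1)"
    and "alcove_level \<gamma> B = alcove_level \<gamma> A + 1"
proof -
  obtain k where wall: "share_wall \<Phi> A B \<gamma> k"
    and below: "\<forall>x\<in>A. x \<bullet> coroot \<gamma> < of_int k" and above: "\<forall>y\<in>B. y \<bullet> coroot \<gamma> > of_int k"
    using arrow unfolding alcove_arrow_def by blast
  have A: "is_alcove \<Phi> A" and B: "is_alcove \<Phi> B" and \<gamma>: "\<gamma> \<in> \<Phi>"
    and dim: "aff_dim (closure A \<inter> closure B \<inter> hyp \<gamma> k) = int DIM('a) - 1"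
    using wall unfolding share_wall_def by auto
  show "\<gamma> \<in> \<Phi>" by (fact \<gamma>)
  have "closure A \<inter> closure B \<inter> hyp \<gamma> k \<noteq> {}"
    using dim DIM_positive[where 'a='a] by auto
  then obtain z where z: "z \<in> closure A" "z \<in> closure B" "z \<bullet> coroot \<gamma> = of_int k"
    by (auto simp: hyp_def)
  obtain x y where x: "x \<in> A" and y: "y \<in> B"
    using alcove_nonempty[OF A] alcove_nonempty[OF B] by blast
  have "of_int k \<le> of_int (alcove_level \<gamma> A) + (1::real)"
    using closure_alcove_level_bounds(2)[OF A \<gamma> z(1)] z(3) by simp
  moreover have "of_int (alcove_level \<gamma> A) < x \<bullet> coroot \<gamma>" "x \<bullet> coroot \<gamma> < of_int k"
    using alcove_subset_level_slab[OF A \<gamma>] x below by (auto simp: level_slab_def)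
  ultimately have "real_of_int (k - 1) \<le> of_int (alcove_level \<gamma> A)" "alcove_level \<gamma> A < k"
    by linarith+
  then have level_A: "alcove_level \<gamma> A + 1 = k" by linarith
  then show "share_wall \<Phi> A B \<gamma> (alcove_level \<gamma> A + 1)" using wall by simp
  have "of_int (alcove_level \<gamma> B) \<le> (of_int k :: real)"
    using closure_alcove_level_bounds(1)[OF B \<gamma> z(2)] z(3) by simp
  moreover have "of_int k < y \<bullet> coroot \<gamma>" "y \<bullet> coroot \<gamma> < of_int (alcove_level \<gamma> B) + 1"
    using alcove_subset_level_slab[OF B \<gamma>] y above by (auto simp: level_slab_def)
  ultimately have "alcove_level \<gamma> B \<le> k" "real_of_int k < of_int (alcove_level \<gamma> B + 1)"
    unfolding of_int_add of_int_1 by linarith+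
  then show "alcove_level \<gamma> B = alcove_level \<gamma> A + 1" using level_A by linarith
qed

text \<open>The reflection fixes the wall pointwise, so an alcove shares it with its mirror image.\<close>
lemma aff_dim_wall_mirror:
  fixes A B :: "'a::euclidean_space set"
  assumes \<gamma>0: "\<gamma> \<noteq> 0" and dim: "aff_dim (closure A \<inter> closure B \<inter> hyp \<gamma> k) = int DIM('a) - 1"
  shows "aff_dim (closure A \<inter> closure (affine_reflection \<gamma> (of_int k) ` A) \<inter> hyp \<gamma> k) = int DIM('a) - 1"
proof -
  let ?s = "affine_reflection \<gamma> (of_int k)"
  have "closure A \<inter> closure B \<inter> hyp \<gamma> k \<subseteq> closure A \<inter> closure (?s ` A) \<inter> hyp \<gamma> k"
  proof
    fix w assume w: "w \<in> closure A \<inter> closure B \<inter> hyp \<gamma> k"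
    then have "?s w = w" by (simp add: hyp_def affine_reflection_def)
    moreover have "?s w \<in> closure (?s ` A)"
      using w closure_affine_reflection_image[OF \<gamma>0] by auto
    ultimately show "w \<in> closure A \<inter> closure (?s ` A) \<inter> hyp \<gamma> k"
      using w by simp
  qed
  then show ?thesis
    using aff_dim_subset aff_dim_wall_le[OF \<gamma>0, of A "?s ` A" k] dim by (metis antisym)
qed

lemma share_wall_eq_affine_reflection:
  fixes A B :: "'a::euclidean_space set"
  assumes rs: "root_system \<Phi>" and wall: "share_wall \<Phi> A B \<gamma> k"
    and levels: "alcove_level \<gamma> A = k - 1" "alcove_level \<gamma> B = k"
  shows "B = affine_reflection \<gamma> (of_int k) ` A"
proof -
  let ?s = "affine_reflection \<gamma> (of_int k)"
  have A: "is_alcove \<Phi> A" and B: "is_alcove \<Phi> B" and \<gamma>: "\<gamma> \<in> \<Phi>"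
    and dim: "aff_dim (closure A \<inter> closure B \<inter> hyp \<gamma> k) = int DIM('a) - 1"
    using wall unfolding share_wall_def by auto
  have \<gamma>0: "\<gamma> \<noteq> 0" using root_system_nonzero[OF rs \<gamma>] .
  have sA: "is_alcove \<Phi> (?s ` A)" by (rule is_alcove_affine_reflection[OF rs \<gamma> A])
  have "?s x \<bullet> coroot \<gamma> = 2 * of_int k - x \<bullet> coroot \<gamma>" for x
    using \<gamma>0 by (simp add: affine_reflection_def inner_diff_left inner_coroot_self algebra_simps)
  then have "?s ` A \<subseteq> level_slab \<gamma> k"
    using alcove_subset_level_slab[OF A \<gamma>] by (auto simp: levels level_slab_def)
  then have level_sA: "alcove_level \<gamma> (?s ` A) = alcove_level \<gamma> B"
    using alcove_nonempty[OF A] levels by (simp add: alcove_levelI)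
  show "B = ?s ` A"
  proof (rule alcove_eqI[OF B sA])
    fix \<delta> assume \<delta>: "\<delta> \<in> \<Phi>"
    consider "\<delta> = \<gamma>" | "\<delta> = - \<gamma>" | "\<delta> \<noteq> \<gamma>" "\<delta> \<noteq> - \<gamma>" by blast
    then show "alcove_level \<delta> B = alcove_level \<delta> (?s ` A)"
    proof cases
      case 1
      then show ?thesis using level_sA by simp
    next
      case 2
      then show ?thesis
        using level_sA alcove_level_uminus[OF sA \<gamma>] alcove_level_uminus[OF B \<gamma>] by simp
    next
      case 3
      have "alcove_level \<delta> A = alcove_level \<delta> (?s ` A)"
        by (rule alcove_level_eq_across_wall[OF rs A sA \<gamma> aff_dim_wall_mirror[OF \<gamma>0 dim] \<delta> 3])
      moreover have "alcove_level \<delta> A = alcove_level \<delta> B"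
        by (rule alcove_level_eq_across_wall[OF rs A B \<gamma> dim \<delta> 3])
      ultimately show ?thesis by simp
    qed
  qed
qed

lemma alcove_arrow_reflection:
  assumes "root_system \<Phi>" "alcove_arrow \<Phi> A \<gamma> B"
  shows "B = affine_reflection \<gamma> (of_int (alcove_level \<gamma> A + 1)) ` A"
  using alcove_arrow_wall[OF assms] by (intro share_wall_eq_affine_reflection[OF assms(1)]) auto

lemma alcove_arrow_level_other:
  assumes rs: "root_system \<Phi>" and arrow: "alcove_arrow \<Phi> A \<gamma> B"
    and \<delta>: "\<delta> \<in> \<Phi>" "\<delta> \<noteq> \<gamma>" "\<delta> \<noteq> - \<gamma>"
  shows "alcove_level \<delta> B = alcove_level \<delta> A"
proof -
  obtain k where "share_wall \<Phi> A B \<gamma> k"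
    using arrow unfolding alcove_arrow_def by blast
  then show ?thesis
    using alcove_level_eq_across_wall[OF rs _ _ _ _ \<delta>] unfolding share_wall_def by metis
qed

section \<open>Shortening alcove paths\<close>

lemma alcove_path_iff:
  "alcove_path \<Phi> As X Y \<longleftrightarrow>
     As \<noteq> [] \<and> hd As = X \<and> last As = Y \<and> (\<forall>A\<in>set As. is_alcove \<Phi> A) \<and> successively (adjacent \<Phi>) As"
  unfolding alcove_path_def successively_conv_nth by blast

text \<open>If a path enters a segment through \<open>F\<close> and leaves it through \<open>F\<close>, the segment can be
  replaced by its image under \<open>F\<close>, which saves the two steps in and out.\<close>
lemma alcove_path_fold_segment:
  assumes path: "alcove_path \<Phi> (xs @ x # ys @ y # zs) X Y"
    and ys: "ys \<noteq> []" "hd ys = F x" "y = F (last ys)"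
    and F: "\<And>A. F (F A) = A" "\<And>A. is_alcove \<Phi> A \<Longrightarrow> is_alcove \<Phi> (F A)"
      "\<And>A B. adjacent \<Phi> A B \<Longrightarrow> adjacent \<Phi> (F A) (F B)"
  shows "alcove_path \<Phi> (xs @ map F ys @ zs) X Y"
proof -
  let ?As = "xs @ x # ys @ y # zs"
  have hd_map: "hd (map F ys) = x" and last_map: "last (map F ys) = y"
    using ys F(1) by (simp_all add: hd_map last_map)
  have adjacent: "successively (adjacent \<Phi>) ?As" and alcoves: "\<forall>A\<in>set ?As. is_alcove \<Phi> A"
    using path by (simp_all add: alcove_path_iff)
  have "successively (adjacent \<Phi>) (map F ys)"
    using adjacent F(3) unfolding successively_map
    by (auto simp: successively_append_iff successively_Cons elim: successively_mono)
  then have "successively (adjacent \<Phi>) (xs @ map F ys @ zs)"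
    using adjacent ys hd_map last_map by (auto simp: successively_append_iff successively_Cons)
  moreover have "hd (xs @ map F ys @ zs) = hd ?As"
    using ys hd_map by (cases xs) simp_all
  moreover have "last (xs @ map F ys @ zs) = last ?As"
    using ys last_map by (cases zs) simp_all
  moreover have "\<forall>A\<in>set (xs @ map F ys @ zs). is_alcove \<Phi> A"
    using alcoves F(2) by auto
  ultimately show ?thesis
    using path ys by (simp add: alcove_path_iff)
qed

lemma alcove_path_shorten:
  assumes path: "alcove_path \<Phi> As X Y" and jk: "j < k" "Suc k < length As"
    and F: "\<And>A. F (F A) = A" "\<And>A. is_alcove \<Phi> A \<Longrightarrow> is_alcove \<Phi> (F A)"
      "\<And>A B. adjacent \<Phi> A B \<Longrightarrow> adjacent \<Phi> (F A) (F B)"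
    and steps: "As ! Suc j = F (As ! j)" "As ! Suc k = F (As ! k)"
  obtains Bs where "alcove_path \<Phi> Bs X Y" "length Bs + 2 = length As"
proof -
  define ys where "ys = take (k - j) (drop (Suc j) As)"
  have "As = take j As @ drop j As" by simp
  also have "drop j As = As ! j # drop (Suc j) As"
    using jk by (simp add: Cons_nth_drop_Suc)
  also have "drop (Suc j) As = ys @ drop (k - j) (drop (Suc j) As)"
    unfolding ys_def by (rule append_take_drop_id[symmetric])
  also have "drop (k - j) (drop (Suc j) As) = drop (Suc k) As"
    using jk by simp
  also have "drop (Suc k) As = As ! Suc k # drop (Suc (Suc k)) As"
    using jk by (simp add: Cons_nth_drop_Suc)
  finally have decomp: "As = take j As @ As ! j # ys @ As ! Suc k # drop (Suc (Suc k)) As" .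
  have ys: "ys \<noteq> []" "hd ys = F (As ! j)" "As ! Suc k = F (last ys)"
    using jk steps by (auto simp: ys_def hd_drop_conv_nth last_conv_nth)
  have "alcove_path \<Phi> (take j As @ map F ys @ drop (Suc (Suc k)) As) X Y"
    using alcove_path_fold_segment[OF _ ys F] path decomp by simp
  moreover have "length (take j As @ map F ys @ drop (Suc (Suc k)) As) + 2 = length As"
    using jk by (simp add: ys_def)
  ultimately show ?thesis by (rule that)
qed

lemma alcove_level_fund_alcove:
  assumes "fund_alcove \<Phi> \<Delta> \<noteq> {}" "\<beta> \<in> pos_roots \<Phi> \<Delta>"
  shows "alcove_level \<beta> (fund_alcove \<Phi> \<Delta>) = 0"
  using assms by (intro alcove_levelI) (auto simp: fund_alcove_def level_slab_def)

lemma uminus_notin_pos_roots: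
  assumes "fund_alcove \<Phi> \<Delta> \<noteq> {}" "\<beta> \<in> pos_roots \<Phi> \<Delta>"
  shows "- \<beta> \<notin> pos_roots \<Phi> \<Delta>"
proof
  assume "- \<beta> \<in> pos_roots \<Phi> \<Delta>"
  moreover obtain x where "x \<in> fund_alcove \<Phi> \<Delta>" using assms(1) by blast
  ultimately have "0 < x \<bullet> coroot \<beta>" "0 < x \<bullet> coroot (- \<beta>)"
    using assms(2) by (auto simp: fund_alcove_def)
  then show False by (simp add: coroot_uminus)
qed

lemma alcove_level_coroot_combination:
  fixes a b :: nat
  assumes A: "is_alcove \<Phi> A" and roots: "\<alpha> \<in> \<Phi>" "\<beta> \<in> \<Phi>" "\<gamma> \<in> \<Phi>"
    and comb: "coroot \<gamma> = of_nat a *\<^sub>R coroot \<alpha> + of_nat b *\<^sub>R coroot \<beta>"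
  shows "int a * alcove_level \<alpha> A + int b * alcove_level \<beta> A \<le> alcove_level \<gamma> A"
    and "alcove_level \<gamma> A < int a * (alcove_level \<alpha> A + 1) + int b * (alcove_level \<beta> A + 1)"
proof -
  obtain x where x: "x \<in> A" using alcove_nonempty[OF A] by blast
  define l where "l \<delta> = alcove_level \<delta> A" for \<delta>
  have slab: "of_int (l \<delta>) < x \<bullet> coroot \<delta>" "x \<bullet> coroot \<delta> < of_int (l \<delta>) + 1" if "\<delta> \<in> \<Phi>" for \<delta>
    using alcove_subset_level_slab[OF A that] x by (auto simp: level_slab_def l_def)
  have x_comb: "x \<bullet> coroot \<gamma> = real a * (x \<bullet> coroot \<alpha>) + real b * (x \<bullet> coroot \<beta>)"
    using comb by (simp add: inner_add_right)
  have "real a * of_int (l \<alpha>) \<le> real a * (x \<bullet> coroot \<alpha>)"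
    "real a * (x \<bullet> coroot \<alpha>) \<le> real a * (of_int (l \<alpha>) + 1)"
    "real b * of_int (l \<beta>) \<le> real b * (x \<bullet> coroot \<beta>)"
    "real b * (x \<bullet> coroot \<beta>) \<le> real b * (of_int (l \<beta>) + 1)"
    using slab roots by (simp_all add: mult_left_mono less_imp_le)
  then have "real_of_int (int a * l \<alpha> + int b * l \<beta>) < of_int (l \<gamma> + 1)"
    "real_of_int (l \<gamma>) < of_int (int a * (l \<alpha> + 1) + int b * (l \<beta> + 1))"
    using slab[OF roots(3)] x_comb by (simp_all add: algebra_simps)
  then show "int a * alcove_level \<alpha> A + int b * alcove_level \<beta> A \<le> alcove_level \<gamma> A"
    "alcove_level \<gamma> A < int a * (alcove_level \<alpha> A + 1) + int b * (alcove_level \<beta> A + 1)"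
    unfolding of_int_less_iff l_def by linarith+
qed

text \<open>If all three levels drop by exactly one from \<open>A\<close> to \<open>B\<close>, the bounds at \<open>A\<close> and at \<open>B\<close>
  together pin down the level of \<open>\<gamma>\<close>.\<close>
lemma alcove_level_coroot_combination_eq:
  fixes a b :: nat
  assumes A: "is_alcove \<Phi> A" and B: "is_alcove \<Phi> B" and roots: "\<alpha> \<in> \<Phi>" "\<beta> \<in> \<Phi>" "\<gamma> \<in> \<Phi>"
    and comb: "coroot \<gamma> = of_nat a *\<^sub>R coroot \<alpha> + of_nat b *\<^sub>R coroot \<beta>"
    and drop: "alcove_level \<alpha> B = alcove_level \<alpha> A - 1" "alcove_level \<beta> B = alcove_level \<beta> A - 1"
      "alcove_level \<gamma> B = alcove_level \<gamma> A - 1"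
  shows "alcove_level \<gamma> A = int a * alcove_level \<alpha> A + int b * alcove_level \<beta> A"
  using alcove_level_coroot_combination(1)[OF A roots comb]
    alcove_level_coroot_combination(2)[OF B roots comb] drop
  by simp

section \<open>Levels along a walk through alcoves\<close>

lemma card_Collect_less_Suc:
  "card {m. m < Suc r \<and> P m} = card {m. m < r \<and> P m} + of_bool (P r)"
proof (cases "P r")
  case True
  then have "{m. m < Suc r \<and> P m} = insert r {m. m < r \<and> P m}" by (auto simp: less_Suc_eq)
  then show ?thesis using True by simp
next
  case False
  then have "{m. m < Suc r \<and> P m} = {m. m < r \<and> P m}" by (auto simp: less_Suc_eq)
  then show ?thesis using False by simp
qed

text \<open>The walk underlying a \<open>\<lambda>\<close>-chain, without the minimality condition.\<close>
locale alcove_walk =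
  fixes \<Phi> :: "'a::euclidean_space set" and As :: "'a set list" and \<beta>s :: "'a list"
  assumes root_system: "root_system \<Phi>"
    and length_alcoves: "length As = Suc (length \<beta>s)"
    and alcoves: "\<And>A. A \<in> set As \<Longrightarrow> is_alcove \<Phi> A"
    and arrows: "\<And>p. p < length \<beta>s \<Longrightarrow> alcove_arrow \<Phi> (As ! p) (- (\<beta>s ! p)) (As ! Suc p)"
begin

lemma is_alcove_nth: "p \<le> length \<beta>s \<Longrightarrow> is_alcove \<Phi> (As ! p)"
  using alcoves length_alcoves by simp

lemma root_nth: "p < length \<beta>s \<Longrightarrow> \<beta>s ! p \<in> \<Phi>"
  using alcove_arrow_wall(1)[OF root_system arrows] root_system_uminus[OF root_system] by force

lemma level_step_up:
  assumes "p < length \<beta>s" "\<beta>s ! p = - \<beta>"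
  shows "alcove_level \<beta> (As ! Suc p) = alcove_level \<beta> (As ! p) + 1"
  using alcove_arrow_wall(3)[OF root_system arrows[OF assms(1)]] assms(2) by simp

lemma reflection_step_up:
  assumes "p < length \<beta>s" "\<beta>s ! p = - \<beta>"
  shows "As ! Suc p = affine_reflection \<beta> (of_int (alcove_level \<beta> (As ! p) + 1)) ` (As ! p)"
  using alcove_arrow_reflection[OF root_system arrows[OF assms(1)]] assms(2) by simp

lemma level_step_down:
  assumes p: "p < length \<beta>s" and \<beta>: "\<beta>s ! p = \<beta>"
  shows "alcove_level \<beta> (As ! Suc p) = alcove_level \<beta> (As ! p) - 1"
proof -
  have "\<beta> \<in> \<Phi>" using root_nth[OF p] \<beta> by simp
  moreover have "is_alcove \<Phi> (As ! p)" "is_alcove \<Phi> (As ! Suc p)"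
    using p by (simp_all add: is_alcove_nth)
  ultimately have "alcove_level (- \<beta>) (As ! p) = - alcove_level \<beta> (As ! p) - 1"
    "alcove_level (- \<beta>) (As ! Suc p) = - alcove_level \<beta> (As ! Suc p) - 1"
    by (simp_all add: alcove_level_uminus)
  moreover have "alcove_level (- \<beta>) (As ! Suc p) = alcove_level (- \<beta>) (As ! p) + 1"
    using level_step_up[OF p] \<beta> by simp
  ultimately show ?thesis by linarith
qed

lemma reflection_step_down:
  assumes p: "p < length \<beta>s" and \<beta>: "\<beta>s ! p = \<beta>"
  shows "As ! Suc p = affine_reflection \<beta> (of_int (alcove_level \<beta> (As ! p))) ` (As ! p)"
proof -
  have "\<beta> \<in> \<Phi>" using root_nth[OF p] \<beta> by simp
  moreover have "is_alcove \<Phi> (As ! p)" using p by (simp add: is_alcove_nth)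
  ultimately have "alcove_level (- \<beta>) (As ! p) + 1 = - alcove_level \<beta> (As ! p)"
    by (simp add: alcove_level_uminus)
  then show ?thesis
    using reflection_step_up[OF p, of "- \<beta>"] \<beta> by (simp add: affine_reflection_uminus)
qed

lemma level_step_other:
  assumes "p < length \<beta>s" "\<beta> \<in> \<Phi>" "\<beta>s ! p \<noteq> \<beta>" "\<beta>s ! p \<noteq> - \<beta>"
  shows "alcove_level \<beta> (As ! Suc p) = alcove_level \<beta> (As ! p)"
  using alcove_arrow_level_other[OF root_system arrows[OF assms(1)] assms(2)] assms(3,4)
  by (metis minus_minus)

lemma level_interval:
  assumes "a + r \<le> length \<beta>s" "\<beta> \<in> \<Phi>"
  shows "alcove_level \<beta> (As ! (a + r)) = alcove_level \<beta> (As ! a)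
    + int (card {m. m < r \<and> \<beta>s ! (a + m) = - \<beta>}) - int (card {m. m < r \<and> \<beta>s ! (a + m) = \<beta>})"
  using assms(1)
proof (induction r)
  case 0
  then show ?case by simp
next
  case (Suc r)
  then have p: "a + r < length \<beta>s" by simp
  have "- \<beta> \<noteq> \<beta>" by (rule root_system_uminus_neq[OF root_system assms(2)])
  consider "\<beta>s ! (a + r) = \<beta>" | "\<beta>s ! (a + r) = - \<beta>" | "\<beta>s ! (a + r) \<noteq> \<beta>" "\<beta>s ! (a + r) \<noteq> - \<beta>"
    by blast
  then show ?case
  proof cases
    case 1
    then show ?thesis
      using Suc level_step_down[OF p] \<open>- \<beta> \<noteq> \<beta>\<close> by (simp add: card_Collect_less_Suc)
  next
    case 2
    then show ?thesis
      using Suc level_step_up[OF p] \<open>- \<beta> \<noteq> \<beta>\<close> by (simp add: card_Collect_less_Suc)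
  next
    case 3
    then show ?thesis
      using Suc level_step_other[OF p assms(2)] by (simp add: card_Collect_less_Suc)
  qed
qed

lemma level_constant:
  assumes "a + r \<le> length \<beta>s" "\<beta> \<in> \<Phi>" "\<And>m. m < r \<Longrightarrow> \<beta>s ! (a + m) \<noteq> \<beta> \<and> \<beta>s ! (a + m) \<noteq> - \<beta>"
  shows "alcove_level \<beta> (As ! (a + r)) = alcove_level \<beta> (As ! a)"
proof -
  have "{m. m < r \<and> \<beta>s ! (a + m) = - \<beta>} = {}" "{m. m < r \<and> \<beta>s ! (a + m) = \<beta>} = {}"
    using assms(3) by auto
  then show ?thesis using level_interval[OF assms(1,2)] by (simp only: card.empty)
qed

lemma level_across_block:
  assumes block: "t + q \<le> length \<beta>s" "r < q"
    and once: "\<And>m. m < q \<Longrightarrow> m \<noteq> r \<Longrightarrow> \<beta>s ! (t + m) \<noteq> \<beta>s ! (t + r) \<and> \<beta>s ! (t + m) \<noteq> - (\<beta>s ! (t + r))"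
  shows "alcove_level (\<beta>s ! (t + r)) (As ! (t + r)) = alcove_level (\<beta>s ! (t + r)) (As ! t)"
    and "alcove_level (\<beta>s ! (t + r)) (As ! (t + q)) = alcove_level (\<beta>s ! (t + r)) (As ! t) - 1"
proof -
  let ?\<beta> = "\<beta>s ! (t + r)"
  have \<beta>: "?\<beta> \<in> \<Phi>" using block by (intro root_nth) simp
  have "- ?\<beta> \<noteq> ?\<beta>" by (rule root_system_uminus_neq[OF root_system \<beta>])
  then have "\<beta>s ! (t + m) \<noteq> - ?\<beta>" if "m < q" for m
    using once[OF that] by (cases "m = r") auto
  then have "{m. m < q \<and> \<beta>s ! (t + m) = - ?\<beta>} = {}" "{m. m < q \<and> \<beta>s ! (t + m) = ?\<beta>} = {r}"
    using once block(2) by auto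
  then show "alcove_level ?\<beta> (As ! (t + q)) = alcove_level ?\<beta> (As ! t) - 1"
    using level_interval[OF block(1) \<beta>] by simp
  show "alcove_level ?\<beta> (As ! (t + r)) = alcove_level ?\<beta> (As ! t)"
    using block once by (intro level_constant[OF _ \<beta>]) auto
qed

end

locale minimal_alcove_walk = alcove_walk +
  fixes X Y :: "'a::euclidean_space set"
  assumes path: "alcove_path \<Phi> As X Y"
    and minimal: "\<And>Bs. alcove_path \<Phi> Bs X Y \<Longrightarrow> length As \<le> length Bs"
begin

lemma first_alcove: "As ! 0 = X"
  using path by (metis alcove_path_def hd_conv_nth)

text \<open>A minimal walk never crosses a hyperplane \<open>H\<^sub>\<beta>\<^sub>,\<^sub>\<cdot>\<close> in direction \<open>\<beta>\<close> and later one in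
  direction \<open>-\<beta>\<close>: taking such a pair with nothing in between, both crossings are reflections in
  the same hyperplane, so reflecting the part of the walk between them saves two steps.\<close>
lemma no_return:
  assumes "j < p" "p < length \<beta>s" "\<beta>s ! j = - \<beta>"
  shows "\<beta>s ! p \<noteq> \<beta>"
proof -
  have "\<beta>s ! (j + d) \<noteq> \<beta>" if "0 < d" "j + d < length \<beta>s" "\<beta>s ! j = - \<beta>" for j d
    using that
  proof (induction d arbitrary: j rule: less_induct)
    case (less d j)
    show ?case
    proof
      assume return: "\<beta>s ! (j + d) = \<beta>"
      have between: "\<beta>s ! (j + m) \<noteq> \<beta> \<and> \<beta>s ! (j + m) \<noteq> - \<beta>" if m: "0 < m" "m < d" for m
        using less.IH[of m j] less.IH[of "d - m" "j + m"] less.prems return m by auto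
      have \<beta>: "\<beta> \<in> \<Phi>" using root_nth[OF less.prems(2)] return by simp
      then have \<beta>0: "\<beta> \<noteq> 0" by (rule root_system_nonzero[OF root_system])
      have "\<beta>s ! (Suc j + m) \<noteq> \<beta> \<and> \<beta>s ! (Suc j + m) \<noteq> - \<beta>" if "m < d - 1" for m
        using between[of "Suc m"] that by simp
      then have "alcove_level \<beta> (As ! (Suc j + (d - 1))) = alcove_level \<beta> (As ! Suc j)"
        using less.prems by (intro level_constant[OF _ \<beta>]) auto
      then have "alcove_level \<beta> (As ! (j + d)) = alcove_level \<beta> (As ! j) + 1"
        using less.prems level_step_up[of j \<beta>] by simp
      define F where "F = image (affine_reflection \<beta> (of_int (alcove_level \<beta> (As ! j) + 1)))"
      obtain Bs where "alcove_path \<Phi> Bs X Y" "length Bs + 2 = length As"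
      proof (rule alcove_path_shorten[OF path, of j "j + d" F])
        show "j < j + d" "Suc (j + d) < length As"
          using less.prems length_alcoves by auto
        show "F (F A) = A" for A
          unfolding F_def by (rule affine_reflection_image_image[OF \<beta>0])
        show "is_alcove \<Phi> (F A)" if "is_alcove \<Phi> A" for A
          unfolding F_def using that by (rule is_alcove_affine_reflection[OF root_system \<beta>])
        show "adjacent \<Phi> (F A) (F B)" if "adjacent \<Phi> A B" for A B
          unfolding F_def using that by (rule adjacent_affine_reflection[OF root_system \<beta>])
        show "As ! Suc j = F (As ! j)"
          unfolding F_def using less.prems by (intro reflection_step_up) auto
        show "As ! Suc (j + d) = F (As ! (j + d))"
          unfolding F_def using less.prems return \<open>alcove_level \<beta> (As ! (j + d)) = _\<close>
          by (metis reflection_step_down)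
      qed (rule that)
      then show False using minimal by fastforce
    qed
  qed
  from this[of "p - j" j] show ?thesis using assms by simp
qed

lemma level_at_occurrence:
  assumes "alcove_level \<beta> X = 0" "p < length \<beta>s" "\<beta>s ! p = \<beta>"
  shows "alcove_level \<beta> (As ! p) = - int (card {j. j < p \<and> \<beta>s ! j = \<beta>})"
proof -
  have "\<beta> \<in> \<Phi>" using root_nth assms(2,3) by blast
  moreover have "{j. j < p \<and> \<beta>s ! j = - \<beta>} = {}"
    using no_return assms(2,3) by fastforce
  ultimately show ?thesis
    using level_interval[of 0 p \<beta>] assms first_alcove by simp
qed

lemma distinct_positive_block_levels:
  assumes X: "X = fund_alcove \<Phi> \<Delta>" and block: "t + q \<le> length \<beta>s" "r < q"
    and dist: "distinct (map (\<lambda>m. \<beta>s ! (t + m)) [0..<q])"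
    and pos: "\<And>m. m < q \<Longrightarrow> \<beta>s ! (t + m) \<in> pos_roots \<Phi> \<Delta>"
  shows "alcove_level (\<beta>s ! (t + r)) (As ! t) = - int (card {j. j < t + r \<and> \<beta>s ! j = \<beta>s ! (t + r)})"
    and "alcove_level (\<beta>s ! (t + r)) (As ! (t + q)) = alcove_level (\<beta>s ! (t + r)) (As ! t) - 1"
proof -
  have fund: "fund_alcove \<Phi> \<Delta> \<noteq> {}"
    using alcove_nonempty[OF is_alcove_nth[of 0]] first_alcove X by simp
  have "\<beta>s ! (t + m) \<noteq> \<beta>s ! (t + r) \<and> \<beta>s ! (t + m) \<noteq> - (\<beta>s ! (t + r))" if "m < q" "m \<noteq> r" for m
    using dist pos[OF that(1)] uminus_notin_pos_roots[OF fund pos[OF block(2)]] that block(2)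
    by (auto simp: distinct_conv_nth)
  then show "alcove_level (\<beta>s ! (t + r)) (As ! t) = - int (card {j. j < t + r \<and> \<beta>s ! j = \<beta>s ! (t + r)})"
    "alcove_level (\<beta>s ! (t + r)) (As ! (t + q)) = alcove_level (\<beta>s ! (t + r)) (As ! t) - 1"
    using level_across_block[OF block] level_at_occurrence alcove_level_fund_alcove[OF fund pos[OF block(2)]]
      block X by simp_all
qed

end

lemma lambda_chain_minimal_walk:
  assumes "root_system \<Phi>" "lambda_chain \<Phi> \<Delta> lam \<beta>s"
  obtains As where "minimal_alcove_walk \<Phi> As \<beta>s (fund_alcove \<Phi> \<Delta>) (shifted_alcove \<Phi> \<Delta> lam)"
  using assms unfolding lambda_chain_def minimal_alcove_walk_def minimal_alcove_walk_axioms_def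
    alcove_walk_def
  by (metis alcove_path_def)

theorem lemma3p4:
  fixes \<Phi> \<Delta> :: "'a::euclidean_space set" and lam :: 'a and \<beta>s :: "'a list"
    and t q n i :: nat and a b :: nat
  assumes rs: "root_system \<Phi>" and spanV: "span \<Phi> = UNIV" and irr: "irreducible_rs \<Phi>"
    and base: "is_base \<Phi> \<Delta>"
    and dom: "dominant \<Phi> \<Delta> lam"
    and chain: "lambda_chain \<Phi> \<Delta> lam \<beta>s"
    and len: "length \<beta>s = n + q" and tn: "t \<le> n"
    and sub: "\<exists>\<Phi>'. \<Phi>' \<subseteq> \<Phi> \<and> root_system \<Phi>' \<and> rank \<Phi>' = 2 \<and>
               (\<lambda>j. \<beta>s ! (t + j)) ` {0..<q} = \<Phi>' \<inter> pos_roots \<Phi> \<Delta>"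
    and dist: "distinct (map (\<lambda>j. \<beta>s ! (t + j)) [0..<q])"
    and i: "1 \<le> i" "i \<le> q"
    and comb: "coroot (\<beta>s ! (t + i - 1)) =
               of_nat a *\<^sub>R coroot (\<beta>s ! t) + of_nat b *\<^sub>R coroot (\<beta>s ! (t + q - 1))"
  shows "card {j. j < t + i - 1 \<and> \<beta>s ! j = \<beta>s ! (t + i - 1)} =
         a * card {j. j < t \<and> \<beta>s ! j = \<beta>s ! t}
         + b * card {j. j < t + q - 1 \<and> \<beta>s ! j = \<beta>s ! (t + q - 1)}"
proof -
  obtain As where "minimal_alcove_walk \<Phi> As \<beta>s (fund_alcove \<Phi> \<Delta>) (shifted_alcove \<Phi> \<Delta> lam)"
    using lambda_chain_minimal_walk[OF rs chain] .
  then interpret minimal_alcove_walk \<Phi> As \<beta>s "fund_alcove \<Phi> \<Delta>" "shifted_alcove \<Phi> \<Delta> lam" .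
  have block: "t + q \<le> length \<beta>s" using len tn by simp
  have pos: "\<beta>s ! (t + m) \<in> pos_roots \<Phi> \<Delta>" if "m < q" for m
    using sub that by auto
  define l where "l r = card {j. j < t + r \<and> \<beta>s ! j = \<beta>s ! (t + r)}" for r
  have levels: "alcove_level (\<beta>s ! (t + r)) (As ! t) = - int (l r)"
    "alcove_level (\<beta>s ! (t + r)) (As ! (t + q)) = alcove_level (\<beta>s ! (t + r)) (As ! t) - 1"
    "\<beta>s ! (t + r) \<in> \<Phi>" if "r < q" for r
    using distinct_positive_block_levels[OF refl block that dist pos] root_nth block that
    by (simp_all add: l_def)
  have idx: "0 < q" "i - 1 < q" "q - 1 < q" "t + i - 1 = t + (i - 1)" "t + q - 1 = t + (q - 1)"
    using i by auto
  have "alcove_level (\<beta>s ! (t + (i - 1))) (As ! t)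
      = int a * alcove_level (\<beta>s ! (t + 0)) (As ! t) + int b * alcove_level (\<beta>s ! (t + (q - 1))) (As ! t)"
    by (rule alcove_level_coroot_combination_eq[OF is_alcove_nth is_alcove_nth
          levels(3)[OF idx(1)] levels(3)[OF idx(3)] levels(3)[OF idx(2)] _
          levels(2)[OF idx(1)] levels(2)[OF idx(3)] levels(2)[OF idx(2)]])
      (use block comb idx in simp_all)
  then have "int (l (i - 1)) = int (a * l 0 + b * l (q - 1))"
    using levels(1)[OF idx(1)] levels(1)[OF idx(2)] levels(1)[OF idx(3)] by simp
  then show ?thesis
    using idx(4,5) by (simp only: of_nat_eq_iff l_def add_0_right)
qed

end
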